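(* Let $\Gamma\subset(\mathbb{RP}^1)^m$ be a real EPBQ-curve, and let $a_{jl},b_{jl},e_{jl}$ be the coefficients of its defining relations. Suppose that there exist indices $j\ne l$ such that the four numbers $a_{jl}$, $-b_{jl}$, $-b_{lj}$, $e_{jl}$ are either all positive or all negative, and either $a_{jl}e_{jl}\ge 1$ or $b_{jl}b_{lj}\ge 1$. Then $\Gamma$ is not realisable.
   Context: A real EPBQ-curve is an irreducible real algebraic curve $\Gamma\subset(\mathbb{RP}^1)^m$ (coordinates $z_1,\dots,z_m$) such that (i) for each $j\ne l$, $a_{jl}z_j^2z_l^2+b_{jl}z_j^2-2z_jz_l+b_{lj}z_l^2+e_{jl}=0$ on $\Gamma$ with real coefficients; (ii) no $z_j$ is identically $0$ or $\infty$ on $\Gamma$; (iii) for $j\ne l$, $z_j,z_l$ are neither directly nor inversely proportional on $\Gamma$. The coefficients are uniquely determined, with $a_{jl}=a_{lj}$, $e_{jl}=e_{lj}$. $\Gamma$ is realisable if there exist $n\ge3$, a decomposition $[n]=I_1\sqcup\dots\sqcup I_m$ into nonempty sets ($p\in I_{j(p)}$), nonzero reals $\lambda_1,\dots,\lambda_n$ with $\lambda_p\ne\pm\lambda_q$ whenever $p\ne q$, $j(p)=j(q)$, and reals $g_{pq}=g_{qp}$ for $p\ne q$, $j(p)=j(q)$, such that the matrices $G=(g_{pq})$, $H=(h_{pq})$ defined by $g_{pp}=h_{pp}=1$; $h_{pq}=\frac{2\lambda_p(\lambda_pg_{pq}-\lambda_q)}{\lambda_p^2-\lambda_q^2}$ if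 $p\ne q$, $j(p)=j(q)$; and, if $j(p)\ne j(q)$, $g_{pq}=\frac12\left(-\frac{a_{j(p)j(q)}}{\lambda_p\lambda_q}+\frac{\lambda_qb_{j(p)j(q)}}{\lambda_p}+\frac{\lambda_pb_{j(q)j(p)}}{\lambda_q}-\lambda_p\lambda_qe_{j(p)j(q)}\right)$, $h_{pq}=\frac{\lambda_pb_{j(q)j(p)}}{\lambda_q}-\lambda_p\lambda_qe_{j(p)j(q)}$, satisfy one of: (S) $G$ positive definite; (E) $G$ degenerate positive semidefinite with all principal minors of sizes $2,\dots,n-1$ strictly positive and no row of $H$ a linear combination of rows of $G$; (L) $G$ non-degenerate with negative index of inertia $1$, all principal minors of sizes $2,\dots,n-1$ strictly positive, and $\sum_{q,r}g^{qr}h_{pq}h_{pr}<0$ for all $p$, where $(g^{qr})=G^{-1}$. *)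

theory Defs
  imports Complex_Main "Jordan_Normal_Form.Determinant" "Jordan_Normal_Form.DL_Submatrix"
begin

text \<open>A point of CP^1 is an element of complex option: Some z is the affine point z,
  None is infinity.  Homogeneous representative: Some z = (z:1), None = (1:0).\<close>

fun hrep :: "complex option \<Rightarrow> complex \<times> complex" where
  "hrep (Some z) = (z, 1)"
| "hrep None = (1, 0)"

definition pts :: "nat \<Rightarrow> (nat \<Rightarrow> complex option) set" where
  "pts m = PiE {..<m} (\<lambda>_. UNIV)"

text \<open>A polynomial in the variables X_j (index 2j) and Y_j (index 2j+1), j < m,
  given as a finite list of (coefficient, exponent vector) monomials.\<close>

type_synonym cpoly = "(complex \<times> (nat \<Rightarrow> nat)) list"

definition mon_eval :: "nat \<Rightarrow> (nat \<Rightarrow> nat) \<Rightarrow> (nat \<Rightarrow> complex option) \<Rightarrow> complex" where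
  "mon_eval m \<alpha> z = (\<Prod>j<m. fst (hrep (z j)) ^ \<alpha> (2*j) * snd (hrep (z j)) ^ \<alpha> (2*j+1))"

definition peval :: "nat \<Rightarrow> cpoly \<Rightarrow> (nat \<Rightarrow> complex option) \<Rightarrow> complex" where
  "peval m P z = (\<Sum>(c,\<alpha>)\<leftarrow>P. c * mon_eval m \<alpha> z)"

text \<open>Multihomogeneity (so that vanishing at a point of (CP^1)^m is well defined).\<close>

definition multihom :: "nat \<Rightarrow> cpoly \<Rightarrow> bool" where
  "multihom m P \<longleftrightarrow> (\<exists>d. \<forall>(c,\<alpha>)\<in>set P. \<forall>j<m. \<alpha> (2*j) + \<alpha> (2*j+1) = d j)"

definition zero_set :: "nat \<Rightarrow> cpoly set \<Rightarrow> (nat \<Rightarrow> complex option) set" where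
  "zero_set m S = {z \<in> pts m. \<forall>P\<in>S. peval m P z = 0}"

definition algebraic_set :: "nat \<Rightarrow> (nat \<Rightarrow> complex option) set \<Rightarrow> bool" where
  "algebraic_set m X \<longleftrightarrow> (\<exists>S. (\<forall>P\<in>S. multihom m P) \<and> X = zero_set m S)"

definition real_algebraic_set :: "nat \<Rightarrow> (nat \<Rightarrow> complex option) set \<Rightarrow> bool" where
  "real_algebraic_set m X \<longleftrightarrow>
     (\<exists>S. (\<forall>P\<in>S. multihom m P \<and> (\<forall>(c,\<alpha>)\<in>set P. c \<in> \<real>)) \<and> X = zero_set m S)"

text \<open>Irreducible algebraic curve: an infinite algebraic set all of whose proper
  algebraic subsets are finite (equivalently: irreducible of dimension one).\<close>

definition irreducible_curve :: "nat \<Rightarrow> (nat \<Rightarrow> complex option) set \<Rightarrow> bool" where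
  "irreducible_curve m X \<longleftrightarrow> algebraic_set m X \<and> infinite X \<and>
     (\<forall>Y. algebraic_set m Y \<and> Y \<subset> X \<longrightarrow> finite Y)"

definition irreducible_real_curve :: "nat \<Rightarrow> (nat \<Rightarrow> complex option) set \<Rightarrow> bool" where
  "irreducible_real_curve m X \<longleftrightarrow> irreducible_curve m X \<and> real_algebraic_set m X"

fun pscale :: "complex \<Rightarrow> complex option \<Rightarrow> complex option" where
  "pscale c (Some w) = Some (c * w)"
| "pscale c None = None"

fun pinv :: "complex option \<Rightarrow> complex option" where
  "pinv (Some w) = (if w = 0 then None else Some (inverse w))"
| "pinv None = Some 0"

text \<open>The homogenised relation
  a z_j^2 z_l^2 + b_jl z_j^2 - 2 z_j z_l + b_lj z_l^2 + e = 0 at a point.\<close>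

definition epbq_rel :: "real \<Rightarrow> real \<Rightarrow> real \<Rightarrow> real \<Rightarrow> complex option \<Rightarrow> complex option \<Rightarrow> bool" where
  "epbq_rel a bjl blj e u v \<longleftrightarrow>
     (let (x1, y1) = hrep u; (x2, y2) = hrep v in
       of_real a * x1^2 * x2^2 + of_real bjl * x1^2 * y2^2 - 2 * x1 * y1 * x2 * y2
       + of_real blj * y1^2 * x2^2 + of_real e * y1^2 * y2^2 = 0)"

definition epbq_curve ::
  "nat \<Rightarrow> (nat \<Rightarrow> complex option) set \<Rightarrow> (nat \<Rightarrow> nat \<Rightarrow> real) \<Rightarrow> (nat \<Rightarrow> nat \<Rightarrow> real)
     \<Rightarrow> (nat \<Rightarrow> nat \<Rightarrow> real) \<Rightarrow> bool" where
  "epbq_curve m \<Gamma> a b e \<longleftrightarrow>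
     irreducible_real_curve m \<Gamma> \<and>
     (\<forall>j<m. \<forall>l<m. j \<noteq> l \<longrightarrow> a j l = a l j \<and> e j l = e l j) \<and>
     (\<forall>j<m. \<forall>l<m. j \<noteq> l \<longrightarrow>
        (\<forall>z\<in>\<Gamma>. epbq_rel (a j l) (b j l) (b l j) (e j l) (z j) (z l))) \<and>
     (\<forall>j<m. \<not> (\<forall>z\<in>\<Gamma>. z j = Some 0) \<and> \<not> (\<forall>z\<in>\<Gamma>. z j = None)) \<and>
     (\<forall>j<m. \<forall>l<m. j \<noteq> l \<longrightarrow>
        \<not> (\<exists>c. c \<noteq> 0 \<and> (\<forall>z\<in>\<Gamma>. z j = pscale c (z l))) \<and>
        \<not> (\<exists>c. c \<noteq> 0 \<and> (\<forall>z\<in>\<Gamma>. z j = pscale c (pinv (z l)))))"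

definition pos_def_mat :: "nat \<Rightarrow> real mat \<Rightarrow> bool" where
  "pos_def_mat n G \<longleftrightarrow> (\<forall>x\<in>carrier_vec n. x \<noteq> 0\<^sub>v n \<longrightarrow> x \<bullet> (G *\<^sub>v x) > 0)"

definition pos_semidef_mat :: "nat \<Rightarrow> real mat \<Rightarrow> bool" where
  "pos_semidef_mat n G \<longleftrightarrow> (\<forall>x\<in>carrier_vec n. x \<bullet> (G *\<^sub>v x) \<ge> 0)"

text \<open>Negative index of inertia: number of negative diagonal entries in a diagonalisation
  of the (symmetric) quadratic form (well defined by Sylvester's law of inertia).\<close>

definition neg_index :: "nat \<Rightarrow> real mat \<Rightarrow> nat \<Rightarrow> bool" where
  "neg_index n G k \<longleftrightarrow> (\<exists>P\<in>carrier_mat n n. invertible_mat P \<and>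
      diagonal_mat (transpose_mat P * G * P) \<and>
      card {i. i < n \<and> (transpose_mat P * G * P) $$ (i,i) < 0} = k)"

definition principal_minors_pos :: "nat \<Rightarrow> real mat \<Rightarrow> bool" where
  "principal_minors_pos n G \<longleftrightarrow>
     (\<forall>S. S \<subseteq> {..<n} \<and> 2 \<le> card S \<and> card S \<le> n - 1 \<longrightarrow> det (submatrix G S S) > 0)"

definition realisable_coeffs ::
  "nat \<Rightarrow> (nat \<Rightarrow> nat \<Rightarrow> real) \<Rightarrow> (nat \<Rightarrow> nat \<Rightarrow> real) \<Rightarrow> (nat \<Rightarrow> nat \<Rightarrow> real) \<Rightarrow> bool" where
  "realisable_coeffs m a b e \<longleftrightarrow>
   (\<exists>n (J :: nat \<Rightarrow> nat) (lam :: nat \<Rightarrow> real) (gs :: nat \<Rightarrow> nat \<Rightarrow> real).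
      n \<ge> 3 \<and> J ` {..<n} = {..<m} \<and>
      (\<forall>p<n. lam p \<noteq> 0) \<and>
      (\<forall>p<n. \<forall>q<n. p \<noteq> q \<and> J p = J q \<longrightarrow> lam p \<noteq> lam q \<and> lam p \<noteq> - lam q) \<and>
      (\<forall>p<n. \<forall>q<n. p \<noteq> q \<and> J p = J q \<longrightarrow> gs p q = gs q p) \<and>
      (let
         g = (\<lambda>p q. if p = q then 1
                    else if J p = J q then gs p q
                    else (- a (J p) (J q) / (lam p * lam q) + lam q * b (J p) (J q) / lam p
                          + lam p * b (J q) (J p) / lam q - lam p * lam q * e (J p) (J q)) / 2);
         h = (\<lambda>p q. if p = q then 1
                    else if J p = J q then
                      2 * lam p * (lam p * gs p q - lam q) / (lam p ^ 2 - lam q ^ 2)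
                    else lam p * b (J q) (J p) / lam q - lam p * lam q * e (J p) (J q));
         G = mat n n (\<lambda>(p, q). g p q);
         H = mat n n (\<lambda>(p, q). h p q)
       in
         pos_def_mat n G
       \<or> (pos_semidef_mat n G \<and> det G = 0 \<and> principal_minors_pos n G \<and>
          (\<forall>p<n. \<not> (\<exists>c :: nat \<Rightarrow> real. \<forall>q<n. H $$ (p, q) = (\<Sum>r<n. c r * G $$ (r, q)))))
       \<or> (det G \<noteq> 0 \<and> neg_index n G 1 \<and> principal_minors_pos n G \<and>
          (\<exists>Gi\<in>carrier_mat n n. inverts_mat G Gi \<and>
             (\<forall>p<n. (\<Sum>q<n. \<Sum>r<n. Gi $$ (q, r) * H $$ (p, q) * H $$ (p, r)) < 0)))))"

definition realisable ::
  "nat \<Rightarrow> (nat \<Rightarrow> complex option) set \<Rightarrow> (nat \<Rightarrow> nat \<Rightarrow> real) \<Rightarrow> (nat \<Rightarrow> nat \<Rightarrow> real)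
     \<Rightarrow> (nat \<Rightarrow> nat \<Rightarrow> real) \<Rightarrow> bool" where
  "realisable m \<Gamma> a b e \<longleftrightarrow> epbq_curve m \<Gamma> a b e \<and> realisable_coeffs m a b e"

end

theory Submission
  imports Defs
begin

text \<open>Take indices p, q of a realisation lying in the blocks I_j and I_l.  Multiplied by
  2 lambda_p lambda_q, the entry g_pq becomes (up to sign) a sum of four terms of equal sign,
  and the hypothesis a e \<ge> 1 or b_jl b_lj \<ge> 1 lets AM-GM bound it below by 2 |lambda_p lambda_q|,
  so |g_pq| > 1.  But in each of the cases (S), (E), (L) the principal 2x2 submatrix of G
  on p, q, which has unit diagonal, is positive definite (for (E) and (L) because n \<ge> 3
  makes it one of the principal minors required to be positive), so |g_pq| < 1.\<close>

lemma sum_supported_on_pair: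
  fixes f :: "nat \<Rightarrow> 'a::comm_monoid_add"
  assumes "p < n" "q < n" "p \<noteq> q" and "\<And>i. i < n \<Longrightarrow> i \<noteq> p \<Longrightarrow> i \<noteq> q \<Longrightarrow> f i = 0"
  shows "(\<Sum>i<n. f i) = f p + f q"
proof -
  have "(\<Sum>i<n. f i) = (\<Sum>i\<in>{p,q}. f i)"
    using assms by (intro sum.mono_neutral_right) auto
  then show ?thesis using assms(3) by simp
qed

lemma quadratic_form_two_support:
  fixes G :: "real mat"
  assumes G: "G \<in> carrier_mat n n" and pq: "p < n" "q < n" "p \<noteq> q"
    and x: "x = vec n (\<lambda>i. if i = p then s else if i = q then t else 0)"
  shows "x \<bullet> (G *\<^sub>v x) = s^2 * G $$ (p,p) + s * t * (G $$ (p,q) + G $$ (q,p)) + t^2 * G $$ (q,q)"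
proof -
  have dim_x: "dim_vec x = n" by (simp add: x)
  have Gx: "(G *\<^sub>v x) $ i = G $$ (i,p) * s + G $$ (i,q) * t" if "i < n" for i
  proof -
    have "(G *\<^sub>v x) $ i = (\<Sum>k<n. G $$ (i,k) * x $ k)"
      using G that by (simp add: scalar_prod_def row_def dim_x atLeast0LessThan)
    also have "\<dots> = G $$ (i,p) * s + G $$ (i,q) * t"
      using pq by (subst sum_supported_on_pair[OF pq]) (auto simp: x)
    finally show ?thesis .
  qed
  have "x \<bullet> (G *\<^sub>v x) = (\<Sum>i<n. x $ i * (G *\<^sub>v x) $ i)"
    using G by (simp add: scalar_prod_def dim_x atLeast0LessThan)
  also have "\<dots> = s * (G *\<^sub>v x) $ p + t * (G *\<^sub>v x) $ q"
    using pq by (subst sum_supported_on_pair[OF pq]) (auto simp: x)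
  finally show ?thesis
    using pq by (simp add: Gx power2_eq_square algebra_simps)
qed

lemma pos_def_mat_entry_bound:
  fixes G :: "real mat"
  assumes G: "G \<in> carrier_mat n n" and pd: "pos_def_mat n G"
    and pq: "p < n" "q < n" "p \<noteq> q" and sym: "G $$ (q,p) = G $$ (p,q)"
  shows "G $$ (p,q)^2 < G $$ (p,p) * G $$ (q,q)"
proof -
  define g where "g = G $$ (p,q)"
  have form_pos: "0 < s^2 * G $$ (p,p) + 2 * s * t * g + t^2 * G $$ (q,q)"
    if "s \<noteq> 0 \<or> t \<noteq> 0" for s t
  proof -
    define x where "x = vec n (\<lambda>i. if i = p then s else if i = q then t else (0::real))"
    have "x $ p = s" "x $ q = t" using pq by (auto simp: x_def)
    then have "x \<noteq> 0\<^sub>v n" using that pq by auto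
    moreover have "x \<in> carrier_vec n" by (simp add: x_def)
    ultimately have "0 < x \<bullet> (G *\<^sub>v x)"
      using pd unfolding pos_def_mat_def by blast
    then show ?thesis
      by (simp add: quadratic_form_two_support[OF G pq x_def] sym g_def)
  qed
  have Gpp: "0 < G $$ (p,p)" using form_pos[of 1 0] by simp
  \<comment> \<open>evaluate the form at the kernel direction (g, -G_pp) of the first row\<close>
  have "0 < G $$ (p,p) * (G $$ (p,p) * G $$ (q,q) - g^2)"
    using form_pos[of g "- G $$ (p,p)"] Gpp by (simp add: power2_eq_square algebra_simps)
  then show ?thesis using Gpp by (simp add: g_def zero_less_mult_iff)
qed

lemma det_dim_2:
  assumes "A \<in> carrier_mat 2 2"
  shows "det A = A $$ (0,0) * A $$ (1,1) - A $$ (0,1) * A $$ (1,0)"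
proof -
  have "det A = (\<Sum>j<2. A $$ (0,j) * cofactor A 0 j)"
    by (rule laplace_expansion_row[OF assms]) auto
  also have "\<dots> = A $$ (0,0) * cofactor A 0 0 + A $$ (0,1) * cofactor A 0 1"
    by (simp add: numeral_2_eq_2)
  also have "cofactor A 0 0 = A $$ (1,1)"
    unfolding cofactor_def using assms by (subst det_single) (auto simp: mat_delete_def)
  also have "cofactor A 0 1 = - A $$ (1,0)"
    unfolding cofactor_def using assms by (subst det_single) (auto simp: mat_delete_def)
  finally show ?thesis by simp
qed

lemma det_submatrix_pair:
  assumes pq: "p < q" and dims: "q < dim_row A" "q < dim_col A"
  shows "det (submatrix A {p,q} {p,q}) = A $$ (p,p) * A $$ (q,q) - A $$ (p,q) * A $$ (q,p)"
proof -
  let ?S = "submatrix A {p,q} {p,q}"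
  have rows: "{i. i < dim_row A \<and> i \<in> {p,q}} = {p,q}"
    and cols: "{i. i < dim_col A \<and> i \<in> {p,q}} = {p,q}"
    and two: "card {p,q} = 2"
    using pq dims by auto
  have S: "?S \<in> carrier_mat 2 2"
    by (rule carrier_matI) (simp_all only: dim_submatrix rows cols two)
  have "{i \<in> {p,q}. i < p} = {}" "{i \<in> {p,q}. i < q} = {p}"
    using pq by auto
  then have pos: "card {i \<in> {p,q}. i < p} = 0" "card {i \<in> {p,q}. i < q} = 1"
    by simp_all
  have "?S $$ (0,0) = A $$ (p,p)" "?S $$ (0,1) = A $$ (p,q)"
    "?S $$ (1,0) = A $$ (q,p)" "?S $$ (1,1) = A $$ (q,q)"
    using submatrix_index_card[of p A p "{p,q}" "{p,q}"] submatrix_index_card[of p A q "{p,q}" "{p,q}"]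
      submatrix_index_card[of q A p "{p,q}" "{p,q}"] submatrix_index_card[of q A q "{p,q}" "{p,q}"]
      pq dims unfolding pos by simp_all
  then show ?thesis by (simp add: det_dim_2[OF S])
qed

lemma principal_minors_pos_entry_bound:
  fixes G :: "real mat"
  assumes G: "G \<in> carrier_mat n n" and minors: "principal_minors_pos n G" and "3 \<le> n"
    and pq: "p < n" "q < n" "p \<noteq> q"
  shows "G $$ (p,q) * G $$ (q,p) < G $$ (p,p) * G $$ (q,q)"
proof -
  have minor: "0 < det (submatrix G {p,q} {p,q})"
    using minors pq \<open>3 \<le> n\<close> unfolding principal_minors_pos_def by auto
  show ?thesis
  proof (cases "p < q")
    case True
    then show ?thesis using minor det_submatrix_pair[OF True, of G] G pq by simp
  next
    case False
    then have "q < p" using pq by simp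
    then show ?thesis
      using minor det_submatrix_pair[OF \<open>q < p\<close>, of G] G pq by (simp add: insert_commute mult.commute)
  qed
qed

lemma two_abs_mult_le_weighted_squares:
  fixes u v s t :: real
  assumes "0 < u" "1 \<le> u * v"
  shows "2 * \<bar>s * t\<bar> \<le> u * s^2 + v * t^2"
proof -
  have "u * (2 * \<bar>s * t\<bar>) \<le> (u * s)^2 + t^2"
    using sum_squares_bound[of "\<bar>u * s\<bar>" "\<bar>t\<bar>"] \<open>0 < u\<close>
    by (simp add: abs_mult power2_eq_square algebra_simps)
  also have "\<dots> \<le> u * (u * s^2 + v * t^2)"
    using mult_right_mono[OF \<open>1 \<le> u * v\<close>, of "t^2"]
    by (simp add: power2_eq_square algebra_simps)
  finally show ?thesis using \<open>0 < u\<close> by simp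
qed

lemma weighted_quartic_gt_two_abs_mult:
  fixes a \<beta> \<gamma> \<epsilon> x y :: real
  assumes pos: "0 < a" "0 < \<beta>" "0 < \<gamma>" "0 < \<epsilon>" and xy: "x \<noteq> 0" "y \<noteq> 0"
    and "1 \<le> a * \<epsilon> \<or> 1 \<le> \<beta> * \<gamma>"
  shows "2 * \<bar>x * y\<bar> < a + \<beta> * y^2 + \<gamma> * x^2 + \<epsilon> * (x * y)^2"
  using \<open>1 \<le> a * \<epsilon> \<or> 1 \<le> \<beta> * \<gamma>\<close>
proof
  assume "1 \<le> a * \<epsilon>"
  then have "2 * \<bar>1 * (x * y)\<bar> \<le> a * 1^2 + \<epsilon> * (x * y)^2"
    using pos by (intro two_abs_mult_le_weighted_squares)
  moreover have "0 < \<beta> * y^2" "0 \<le> \<gamma> * x^2" using pos xy by simp_all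
  ultimately show ?thesis by simp
next
  assume "1 \<le> \<beta> * \<gamma>"
  then have "2 * \<bar>y * x\<bar> \<le> \<beta> * y^2 + \<gamma> * x^2"
    using pos by (intro two_abs_mult_le_weighted_squares)
  moreover have "\<bar>y * x\<bar> = \<bar>x * y\<bar>" by (simp add: mult.commute)
  moreover have "0 \<le> \<epsilon> * (x * y)^2" using pos by simp
  ultimately show ?thesis using pos by linarith
qed

text \<open>The Gram entry g_pq of a realisation for j(p) = j, j(q) = l with j \<noteq> l, where
  A = a_jl, B = b_jl, C = b_lj, E = e_jl, x = lambda_p and y = lambda_q.\<close>

definition gram_entry :: "real \<Rightarrow> real \<Rightarrow> real \<Rightarrow> real \<Rightarrow> real \<Rightarrow> real \<Rightarrow> real" where
  "gram_entry A B C E x y = (- A / (x * y) + y * B / x + x * C / y - x * y * E) / 2"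

lemma gram_entry_swap: "gram_entry A B C E x y = gram_entry A C B E y x"
  by (simp add: gram_entry_def mult.commute)

lemma gram_entry_mult:
  assumes "x \<noteq> 0" "y \<noteq> 0"
  shows "2 * gram_entry A B C E x y * (x * y) = - A + B * y^2 + C * x^2 - E * (x * y)^2"
  using assms by (simp add: gram_entry_def field_simps power2_eq_square)

lemma abs_gram_entry_gt_one:
  fixes A B C E x y :: real
  assumes signs: "(A > 0 \<and> - B > 0 \<and> - C > 0 \<and> E > 0) \<or> (A < 0 \<and> - B < 0 \<and> - C < 0 \<and> E < 0)"
    and ineq: "A * E \<ge> 1 \<or> B * C \<ge> 1" and xy: "x \<noteq> 0" "y \<noteq> 0"
  shows "1 < \<bar>gram_entry A B C E x y\<bar>"
proof -
  let ?Q = "- A + B * y^2 + C * x^2 - E * (x * y)^2"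
  have "2 * \<bar>x * y\<bar> < \<bar>?Q\<bar>"
    using signs
  proof
    assume "A > 0 \<and> - B > 0 \<and> - C > 0 \<and> E > 0"
    then have "2 * \<bar>x * y\<bar> < A + (- B) * y^2 + (- C) * x^2 + E * (x * y)^2"
      using ineq xy by (intro weighted_quartic_gt_two_abs_mult) auto
    then show ?thesis by linarith
  next
    assume "A < 0 \<and> - B < 0 \<and> - C < 0 \<and> E < 0"
    then have "2 * \<bar>x * y\<bar> < - A + B * y^2 + C * x^2 + (- E) * (x * y)^2"
      using ineq xy by (intro weighted_quartic_gt_two_abs_mult) auto
    then show ?thesis by linarith
  qed
  also have "\<bar>?Q\<bar> = 2 * \<bar>gram_entry A B C E x y\<bar> * \<bar>x * y\<bar>"
    unfolding gram_entry_mult[OF xy, symmetric] by (simp add: abs_mult)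
  finally show ?thesis using xy by (simp add: mult_less_cancel_right)
qed

lemma realisable_coeffs_gram_entry_lt_one:
  assumes "realisable_coeffs m a b e" and jl: "j < m" "l < m" "j \<noteq> l"
    and sym: "a l j = a j l" "e l j = e j l"
  obtains x y where "x \<noteq> 0" "y \<noteq> 0" "\<bar>gram_entry (a j l) (b j l) (b l j) (e j l) x y\<bar> < 1"
proof -
  define G where "G n J lam gs = mat n n (\<lambda>(p, q). if p = q then 1 else if J p = J q then gs p q
      else gram_entry (a (J p) (J q)) (b (J p) (J q)) (b (J q) (J p)) (e (J p) (J q)) (lam p) (lam q))"
    for n and J :: "nat \<Rightarrow> nat" and lam :: "nat \<Rightarrow> real" and gs :: "nat \<Rightarrow> nat \<Rightarrow> real"
  obtain n J lam gs where n: "3 \<le> n" and J: "J ` {..<n} = {..<m}" and lam: "\<forall>p<n. lam p \<noteq> 0"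
    and cases: "pos_def_mat n (G n J lam gs) \<or> principal_minors_pos n (G n J lam gs)"
    using assms(1) unfolding realisable_coeffs_def Let_def G_def gram_entry_def by blast
  obtain p q where pq: "p < n" "q < n" "J p = j" "J q = l"
    using J jl by (metis imageE lessThan_iff)
  with jl have "p \<noteq> q" by auto
  define g where "g = gram_entry (a j l) (b j l) (b l j) (e j l) (lam p) (lam q)"
  have carrier: "G n J lam gs \<in> carrier_mat n n" by (simp add: G_def)
  have entries: "G n J lam gs $$ (p,p) = 1" "G n J lam gs $$ (q,q) = 1"
    "G n J lam gs $$ (p,q) = g" "G n J lam gs $$ (q,p) = g"
    using pq \<open>p \<noteq> q\<close> jl sym
    by (auto simp: G_def g_def gram_entry_swap[of "a j l" "b j l" "b l j"])
  have "g^2 < 1"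
    using cases
  proof
    assume "pos_def_mat n (G n J lam gs)"
    then show ?thesis
      using pos_def_mat_entry_bound[OF carrier _ pq(1,2) \<open>p \<noteq> q\<close>] entries by simp
  next
    assume "principal_minors_pos n (G n J lam gs)"
    then show ?thesis
      using principal_minors_pos_entry_bound[OF carrier _ n pq(1,2) \<open>p \<noteq> q\<close>] entries
      by (simp add: power2_eq_square)
  qed
  then have "\<bar>g\<bar> < 1" by (simp add: abs_square_less_1)
  with lam pq(1,2) show thesis by (intro that[of "lam p" "lam q"]) (auto simp: g_def)
qed

theorem mainTheorem7:
  fixes m :: nat and \<Gamma> :: "(nat \<Rightarrow> complex option) set"
    and a b e :: "nat \<Rightarrow> nat \<Rightarrow> real" and j l :: nat
  assumes curve: "epbq_curve m \<Gamma> a b e"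
    and jl: "j < m" "l < m" "j \<noteq> l"
    and signs: "(a j l > 0 \<and> - b j l > 0 \<and> - b l j > 0 \<and> e j l > 0) \<or>
                (a j l < 0 \<and> - b j l < 0 \<and> - b l j < 0 \<and> e j l < 0)"
    and ineq: "a j l * e j l \<ge> 1 \<or> b j l * b l j \<ge> 1"
  shows "\<not> realisable m \<Gamma> a b e"
proof
  assume "realisable m \<Gamma> a b e"
  then have coeffs: "realisable_coeffs m a b e" by (simp add: realisable_def)
  have sym: "a l j = a j l" "e l j = e j l"
    using curve jl unfolding epbq_curve_def by auto
  obtain x y where "x \<noteq> 0" "y \<noteq> 0" "\<bar>gram_entry (a j l) (b j l) (b l j) (e j l) x y\<bar> < 1"
    using realisable_coeffs_gram_entry_lt_one[OF coeffs jl sym] .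
  moreover have "1 < \<bar>gram_entry (a j l) (b j l) (b l j) (e j l) x y\<bar>"
    if "x \<noteq> 0" "y \<noteq> 0" for x y
    using abs_gram_entry_gt_one[OF signs ineq that] .
  ultimately show False by fastforce
qed

end
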